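(* Let $(\Omega,\Sigma,\mathbb P)$ be any probability space. The Banach couple $(\ell_1,\ell_2)$ is not $\mathcal K$-closed representable in the Banach couple $(L_\infty(\Omega),L_2(\Omega))$.
   Context: For a Banach couple $(X_0,X_1)$, $x\in X_0+X_1$ and $t>0$, $\mathcal K(t,x;X_0,X_1)=\inf\{\|x_0\|_{X_0}+t\|x_1\|_{X_1}: x=x_0+x_1,\ x_0\in X_0,\ x_1\in X_1\}$. A Banach couple $(X_0,X_1)$ is $\mathcal K$-closed representable in a Banach couple $(Y_0,Y_1)$ if there is a linear operator $T:X_0+X_1\to Y_0+Y_1$ which is injective and bounded from $X_0$ into $Y_0$ and from $X_1$ into $Y_1$, and a constant $C>0$ such that $C^{-1}\mathcal K(t,x;X_0,X_1)\le\mathcal K(t,Tx;Y_0,Y_1)\le C\,\mathcal K(t,x;X_0,X_1)$ for all $x\in X_0+X_1$ and $t>0$. *)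

theory Defs
  imports "HOL-Probability.Probability"
begin

definition l1 :: "(nat \<Rightarrow> real) set" where
  "l1 = {x. summable (\<lambda>n. \<bar>x n\<bar>)}"

definition l1_norm :: "(nat \<Rightarrow> real) \<Rightarrow> real" where
  "l1_norm x = (\<Sum>n. \<bar>x n\<bar>)"

definition l2 :: "(nat \<Rightarrow> real) set" where
  "l2 = {x. summable (\<lambda>n. (x n)^2)}"

definition l2_norm :: "(nat \<Rightarrow> real) \<Rightarrow> real" where
  "l2_norm x = sqrt (\<Sum>n. (x n)^2)"

definition l12_sum :: "(nat \<Rightarrow> real) set" where
  "l12_sum = {x. \<exists>x0\<in>l1. \<exists>x1\<in>l2. \<forall>i. x i = x0 i + x1 i}"

definition K_l12 :: "real \<Rightarrow> (nat \<Rightarrow> real) \<Rightarrow> real" where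
  "K_l12 t x = Inf {l1_norm x0 + t * l2_norm x1 | x0 x1.
      x0 \<in> l1 \<and> x1 \<in> l2 \<and> (\<forall>i. x i = x0 i + x1 i)}"

section \<open>The function couple (L_infty(M), L_2(M)); elements are represented by
  functions, equality of elements is almost-everywhere equality\<close>

definition Linf :: "'a measure \<Rightarrow> ('a \<Rightarrow> real) set" where
  "Linf M = {f \<in> borel_measurable M. \<exists>C. AE \<omega> in M. \<bar>f \<omega>\<bar> \<le> C}"

definition Linf_norm :: "'a measure \<Rightarrow> ('a \<Rightarrow> real) \<Rightarrow> real" where
  "Linf_norm M f = Inf {C. 0 \<le> C \<and> (AE \<omega> in M. \<bar>f \<omega>\<bar> \<le> C)}"

definition L2 :: "'a measure \<Rightarrow> ('a \<Rightarrow> real) set" where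
  "L2 M = {f \<in> borel_measurable M. integrable M (\<lambda>\<omega>. (f \<omega>)^2)}"

definition L2_norm :: "'a measure \<Rightarrow> ('a \<Rightarrow> real) \<Rightarrow> real" where
  "L2_norm M f = sqrt (\<integral>\<omega>. (f \<omega>)^2 \<partial>M)"

definition LinfL2_sum :: "'a measure \<Rightarrow> ('a \<Rightarrow> real) set" where
  "LinfL2_sum M = {f. \<exists>f0\<in>Linf M. \<exists>f1\<in>L2 M. AE \<omega> in M. f \<omega> = f0 \<omega> + f1 \<omega>}"

definition K_LinfL2 :: "'a measure \<Rightarrow> real \<Rightarrow> ('a \<Rightarrow> real) \<Rightarrow> real" where
  "K_LinfL2 M t f = Inf {Linf_norm M f0 + t * L2_norm M f1 | f0 f1.
      f0 \<in> Linf M \<and> f1 \<in> L2 M \<and> (AE \<omega> in M. f \<omega> = f0 \<omega> + f1 \<omega>)}"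

definition l12_K_closed_representable_in_LinfL2 :: "'a measure \<Rightarrow> bool" where
  "l12_K_closed_representable_in_LinfL2 M \<longleftrightarrow>
    (\<exists>T :: (nat \<Rightarrow> real) \<Rightarrow> ('a \<Rightarrow> real). \<exists>C > 0.
       \<comment> \<open>T maps X0 + X1 into Y0 + Y1\<close>
       (\<forall>x\<in>l12_sum. T x \<in> LinfL2_sum M) \<and>
       \<comment> \<open>T is linear (as a map into a.e.-classes)\<close>
       (\<forall>x\<in>l12_sum. \<forall>y\<in>l12_sum. \<forall>a b :: real.
          AE \<omega> in M. T (\<lambda>i. a * x i + b * y i) \<omega> = a * T x \<omega> + b * T y \<omega>) \<and>
       \<comment> \<open>T is injective (as a map into a.e.-classes)\<close>
       (\<forall>x\<in>l12_sum. \<forall>y\<in>l12_sum. (AE \<omega> in M. T x \<omega> = T y \<omega>) \<longrightarrow> x = y) \<and>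
       \<comment> \<open>T is bounded from l1 into L_infty\<close>
       (\<exists>B. \<forall>x\<in>l1. T x \<in> Linf M \<and> Linf_norm M (T x) \<le> B * l1_norm x) \<and>
       \<comment> \<open>T is bounded from l2 into L_2\<close>
       (\<exists>B. \<forall>x\<in>l2. T x \<in> L2 M \<and> L2_norm M (T x) \<le> B * l2_norm x) \<and>
       \<comment> \<open>two-sided K-functional estimate\<close>
       (\<forall>x\<in>l12_sum. \<forall>t>0.
          K_l12 t x / C \<le> K_LinfL2 M t (T x) \<and> K_LinfL2 M t (T x) \<le> C * K_l12 t x))"

end

theory Submission
  imports Defs
begin

(* Suppose T represents (l1, l2) in (L_infty, L_2) with constant C.  Boundedness from l1 into
   L_infty makes the images f_i = T e_i of the unit vectors uniformly bounded by some D.  For a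
   sign pattern on N coordinates the sequence x = (+-1, ..., +-1, 0, ...) has
   K(sqrt N, x; l1, l2) >= N by Cauchy-Schwarz, so phi = T x = sum (+-f_i) has
   K(sqrt N, phi; L_infty, L_2) >= N / C.  Cutting phi at height N / (2 C) into a bounded part and
   a tail, whose L_2 norm is controlled by the fourth moment, forces E phi^4 >= N^3 / (16 C^4).
   But averaged over all 2^N sign patterns, the fourth-moment Khintchine inequality bounds
   E phi^4 by 3 N^2 D^4, which is impossible once N > 48 C^4 D^4. *)

section \<open>Fourth moments of random sign sums\<close>

(* A sign pattern on I is the set A of coordinates carrying +1, so a sum over Pow I is 2 ^ card I
   times the expectation over independent uniform random signs. *)
definition sign_vec :: "'i set \<Rightarrow> 'i \<Rightarrow> real" where
  "sign_vec A i = (if i \<in> A then 1 else -1)"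

lemma abs_sign_vec [simp]: "\<bar>sign_vec A i\<bar> = 1"
  by (simp add: sign_vec_def)

lemma sum_Pow_insert:
  assumes "finite F" "x \<notin> F"
  shows "(\<Sum>A\<in>Pow (insert x F). g A) = (\<Sum>A\<in>Pow F. g A + g (insert x A))"
proof -
  have "inj_on (insert x) (Pow F)"
    using assms(2) by (auto intro!: inj_onI)
  then have "(\<Sum>A\<in>insert x ` Pow F. g A) = (\<Sum>A\<in>Pow F. g (insert x A))"
    by (simp add: sum.reindex)
  moreover have "(\<Sum>A\<in>Pow (insert x F). g A) = (\<Sum>A\<in>Pow F. g A) + (\<Sum>A\<in>insert x ` Pow F. g A)"
    unfolding Pow_insert by (rule sum.union_disjoint) (use assms in auto)
  ultimately show ?thesis
    by (simp add: sum.distrib)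
qed

lemma signed_sum_insert:
  assumes "finite F" "x \<notin> F" "A \<subseteq> F"
  shows "(\<Sum>i\<in>insert x F. sign_vec A i * a i) = (\<Sum>i\<in>F. sign_vec A i * a i) - a x"
    and "(\<Sum>i\<in>insert x F. sign_vec (insert x A) i * a i) = (\<Sum>i\<in>F. sign_vec A i * a i) + a x"
proof -
  show "(\<Sum>i\<in>insert x F. sign_vec A i * a i) = (\<Sum>i\<in>F. sign_vec A i * a i) - a x"
    using assms by (auto simp: sign_vec_def)
  have "(\<Sum>i\<in>F. sign_vec (insert x A) i * a i) = (\<Sum>i\<in>F. sign_vec A i * a i)"
    using assms(2) by (intro sum.cong) (auto simp: sign_vec_def)
  then show "(\<Sum>i\<in>insert x F. sign_vec (insert x A) i * a i) = (\<Sum>i\<in>F. sign_vec A i * a i) + a x"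
    using assms by (simp add: sign_vec_def)
qed

lemma abs_signed_sum_le:
  fixes a :: "'i \<Rightarrow> real" and B :: real
  assumes "\<And>i. i \<in> I \<Longrightarrow> \<bar>a i\<bar> \<le> B"
  shows "\<bar>\<Sum>i\<in>I. sign_vec A i * a i\<bar> \<le> card I * B"
proof -
  have "\<bar>\<Sum>i\<in>I. sign_vec A i * a i\<bar> \<le> (\<Sum>i\<in>I. \<bar>sign_vec A i * a i\<bar>)"
    by (rule sum_abs)
  also have "\<dots> \<le> (\<Sum>i\<in>I. B)"
    using assms by (intro sum_mono) (simp add: abs_mult)
  finally show ?thesis
    by simp
qed

lemma sum_Pow_signed_sum_square:
  assumes "finite I"
  shows "(\<Sum>A\<in>Pow I. (\<Sum>i\<in>I. sign_vec A i * a i)^2) = 2 ^ card I * (\<Sum>i\<in>I. (a i)^2)"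
  using assms
proof (induction I rule: finite_induct)
  case empty
  then show ?case by simp
next
  case (insert x F)
  let ?S = "\<lambda>A. \<Sum>i\<in>F. sign_vec A i * a i"
  have "(\<Sum>A\<in>Pow (insert x F). (\<Sum>i\<in>insert x F. sign_vec A i * a i)^2)
      = (\<Sum>A\<in>Pow F. (?S A - a x)^2 + (?S A + a x)^2)"
    using insert.hyps by (simp add: sum_Pow_insert signed_sum_insert del: sum.insert)
  also have "\<dots> = (\<Sum>A\<in>Pow F. 2 * (?S A)^2 + 2 * (a x)^2)"
    by (intro sum.cong) (simp_all add: power2_eq_square algebra_simps)
  also have "\<dots> = 2 * (\<Sum>A\<in>Pow F. (?S A)^2) + 2 ^ Suc (card F) * (a x)^2"
    using insert.hyps by (simp add: sum.distrib sum_distrib_left card_Pow)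
  finally show ?case
    using insert by (simp add: algebra_simps)
qed

lemma sum_Pow_signed_sum_fourth_le:
  assumes "finite I"
  shows "(\<Sum>A\<in>Pow I. (\<Sum>i\<in>I. sign_vec A i * a i)^4) \<le> 3 * 2 ^ card I * (\<Sum>i\<in>I. (a i)^2)^2"
  using assms
proof (induction I rule: finite_induct)
  case empty
  then show ?case by simp
next
  case (insert x F)
  let ?S = "\<lambda>A. \<Sum>i\<in>F. sign_vec A i * a i" and ?Q = "\<Sum>i\<in>F. (a i)^2" and ?n = "card F"
  have "(\<Sum>A\<in>Pow (insert x F). (\<Sum>i\<in>insert x F. sign_vec A i * a i)^4)
      = (\<Sum>A\<in>Pow F. (?S A - a x)^4 + (?S A + a x)^4)"
    using insert.hyps by (simp add: sum_Pow_insert signed_sum_insert del: sum.insert)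
  also have "\<dots> = (\<Sum>A\<in>Pow F. 2 * (?S A)^4 + 12 * (a x)^2 * (?S A)^2 + 2 * (a x)^4)"
    by (intro sum.cong) (simp_all add: power2_eq_square power4_eq_xxxx algebra_simps)
  also have "\<dots> = 2 * (\<Sum>A\<in>Pow F. (?S A)^4) + 12 * (a x)^2 * (\<Sum>A\<in>Pow F. (?S A)^2)
      + real (card (Pow F)) * 2 * (a x)^4"
    by (simp add: sum.distrib sum_distrib_left)
  also have "\<dots> = 2 * (\<Sum>A\<in>Pow F. (?S A)^4) + 12 * (a x)^2 * (2 ^ ?n * ?Q) + 2 ^ ?n * 2 * (a x)^4"
    using insert.hyps by (simp add: card_Pow sum_Pow_signed_sum_square)
  also have "\<dots> \<le> 2 * (3 * 2 ^ ?n * ?Q^2) + 12 * (a x)^2 * (2 ^ ?n * ?Q) + 2 ^ ?n * 6 * (a x)^4"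
    using insert.IH by (intro add_mono) auto
  also have "\<dots> = 3 * 2 ^ card (insert x F) * (\<Sum>i\<in>insert x F. (a i)^2)^2"
    using insert.hyps by (simp add: power2_eq_square power4_eq_xxxx algebra_simps)
  finally show ?case .
qed

lemma l1_finite_support: "finite {i. x i \<noteq> 0} \<Longrightarrow> x \<in> l1"
  unfolding l1_def by (auto intro!: summable_finite)

lemma l1_subset_l12_sum: "l1 \<subseteq> l12_sum"
proof
  fix x assume "x \<in> l1"
  moreover have "(\<lambda>_. 0) \<in> l2"
    by (simp add: l2_def)
  ultimately show "x \<in> l12_sum"
    unfolding l12_sum_def by force
qed

lemma l12_sum_finite_support:
  assumes "finite I" "\<And>i. i \<notin> I \<Longrightarrow> x i = 0"
  shows "x \<in> l12_sum"
proof -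
  have "finite {i. x i \<noteq> 0}"
    using assms by (auto intro: finite_subset[of _ I])
  then show ?thesis
    using l1_finite_support l1_subset_l12_sum by blast
qed

lemma sum_abs_le_l1_norm:
  assumes "x \<in> l1" "finite I"
  shows "(\<Sum>i\<in>I. \<bar>x i\<bar>) \<le> l1_norm x"
  unfolding l1_norm_def using assms by (intro sum_le_suminf) (auto simp: l1_def)

lemma sum_abs_le_l2_norm:
  assumes "x \<in> l2" "finite I"
  shows "(\<Sum>i\<in>I. \<bar>x i\<bar>) \<le> sqrt (card I) * l2_norm x"
proof -
  have summable: "summable (\<lambda>i. (x i)^2)"
    using assms(1) by (simp add: l2_def)
  have "(\<Sum>i\<in>I. \<bar>x i\<bar>)^2 = (\<Sum>i\<in>I. 1 * \<bar>x i\<bar>)^2"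
    by simp
  also have "\<dots> \<le> card I * (\<Sum>i\<in>I. (x i)^2)"
    using Cauchy_Schwarz_ineq_sum[where a="\<lambda>_. 1" and b="\<lambda>i. \<bar>x i\<bar>" and I=I] by simp
  also have "\<dots> \<le> card I * (\<Sum>i. (x i)^2)"
    using summable assms(2) by (intro mult_left_mono sum_le_suminf) auto
  also have "\<dots> = (sqrt (card I) * l2_norm x)^2"
    using summable by (simp add: l2_norm_def power_mult_distrib suminf_nonneg)
  finally have "(\<Sum>i\<in>I. \<bar>x i\<bar>)^2 \<le> (sqrt (card I) * l2_norm x)^2" .
  then show ?thesis
    by (rule power2_le_imp_le) (simp add: l2_norm_def summable suminf_nonneg)
qed

lemma sum_abs_le_K_l12:
  assumes "x \<in> l12_sum" "finite I"
  shows "(\<Sum>i\<in>I. \<bar>x i\<bar>) \<le> K_l12 (sqrt (card I)) x"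
  unfolding K_l12_def
proof (rule cInf_greatest)
  show "{l1_norm x0 + sqrt (card I) * l2_norm x1 | x0 x1.
      x0 \<in> l1 \<and> x1 \<in> l2 \<and> (\<forall>i. x i = x0 i + x1 i)} \<noteq> {}"
    using assms(1) by (auto simp: l12_sum_def)
  fix s assume "s \<in> {l1_norm x0 + sqrt (card I) * l2_norm x1 | x0 x1.
      x0 \<in> l1 \<and> x1 \<in> l2 \<and> (\<forall>i. x i = x0 i + x1 i)}"
  then obtain x0 x1 where s: "s = l1_norm x0 + sqrt (card I) * l2_norm x1"
    and "x0 \<in> l1" "x1 \<in> l2" and x: "\<And>i. x i = x0 i + x1 i"
    by blast
  have "(\<Sum>i\<in>I. \<bar>x i\<bar>) \<le> (\<Sum>i\<in>I. \<bar>x0 i\<bar>) + (\<Sum>i\<in>I. \<bar>x1 i\<bar>)"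
    unfolding x sum.distrib[symmetric] by (intro sum_mono abs_triangle_ineq)
  also have "\<dots> \<le> s"
    unfolding s using \<open>x0 \<in> l1\<close> \<open>x1 \<in> l2\<close> assms(2)
    by (intro add_mono sum_abs_le_l1_norm sum_abs_le_l2_norm)
  finally show "(\<Sum>i\<in>I. \<bar>x i\<bar>) \<le> s" .
qed

lemma Linf_bounds_nonempty:
  assumes "f \<in> Linf M"
  shows "{C. 0 \<le> C \<and> (AE \<omega> in M. \<bar>f \<omega>\<bar> \<le> C)} \<noteq> {}"
proof -
  from assms obtain C where "AE \<omega> in M. \<bar>f \<omega>\<bar> \<le> C"
    by (auto simp: Linf_def)
  then have "max C 0 \<in> {C. 0 \<le> C \<and> (AE \<omega> in M. \<bar>f \<omega>\<bar> \<le> C)}"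
    by (auto elim!: eventually_mono)
  then show ?thesis
    by blast
qed

lemma Linf_norm_nonneg: "f \<in> Linf M \<Longrightarrow> 0 \<le> Linf_norm M f"
  unfolding Linf_norm_def by (rule cInf_greatest[OF Linf_bounds_nonempty]) simp_all

lemma Linf_norm_le:
  assumes "AE \<omega> in M. \<bar>f \<omega>\<bar> \<le> c" "0 \<le> c"
  shows "Linf_norm M f \<le> c"
  unfolding Linf_norm_def using assms by (intro cInf_lower) (auto intro!: bdd_belowI[of _ 0])

lemma AE_abs_le_of_Linf_norm_less:
  assumes "f \<in> Linf M" "Linf_norm M f < c"
  shows "AE \<omega> in M. \<bar>f \<omega>\<bar> \<le> c"
proof -
  obtain d where "AE \<omega> in M. \<bar>f \<omega>\<bar> \<le> d" "d < c"
    using cInf_lessD[OF Linf_bounds_nonempty[OF assms(1)]] assms(2)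
    unfolding Linf_norm_def by blast
  then show ?thesis
    by (auto elim!: eventually_mono)
qed

lemma K_LinfL2_le:
  assumes "0 \<le> t" "f0 \<in> Linf M" "f1 \<in> L2 M" "AE \<omega> in M. f \<omega> = f0 \<omega> + f1 \<omega>"
  shows "K_LinfL2 M t f \<le> Linf_norm M f0 + t * L2_norm M f1"
  unfolding K_LinfL2_def
proof (rule cInf_lower)
  show "Linf_norm M f0 + t * L2_norm M f1 \<in> {Linf_norm M f0 + t * L2_norm M f1 | f0 f1.
      f0 \<in> Linf M \<and> f1 \<in> L2 M \<and> (AE \<omega> in M. f \<omega> = f0 \<omega> + f1 \<omega>)}"
    using assms by blast
  show "bdd_below {Linf_norm M f0 + t * L2_norm M f1 | f0 f1.
      f0 \<in> Linf M \<and> f1 \<in> L2 M \<and> (AE \<omega> in M. f \<omega> = f0 \<omega> + f1 \<omega>)}"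
    using assms(1)
    by (auto intro!: bdd_belowI[of _ 0] add_nonneg_nonneg mult_nonneg_nonneg Linf_norm_nonneg
        simp: L2_norm_def)
qed

lemma K_LinfL2_cong_AE:
  assumes "AE \<omega> in M. f \<omega> = g \<omega>"
  shows "K_LinfL2 M t f = K_LinfL2 M t g"
proof -
  have "(AE \<omega> in M. f \<omega> = f0 \<omega> + f1 \<omega>) \<longleftrightarrow> (AE \<omega> in M. g \<omega> = f0 \<omega> + f1 \<omega>)" for f0 f1
    using assms by (auto elim: AE_mp)
  then show ?thesis
    unfolding K_LinfL2_def by simp
qed

lemma truncation_tail_sq_le:
  fixes p l :: real
  assumes "0 < l"
  shows "(if \<bar>p\<bar> \<le> l then 0 else p)^2 \<le> p^4 / l^2"
proof (cases "\<bar>p\<bar> \<le> l")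
  case False
  then have "\<bar>l\<bar> \<le> \<bar>p\<bar>"
    using assms by simp
  then have "l^2 \<le> p^2"
    by (simp only: abs_le_square_iff)
  then have "p^2 * l^2 \<le> p^2 * p^2"
    by (intro mult_left_mono) auto
  then show ?thesis
    using False assms by (simp add: field_simps power4_eq_xxxx power2_eq_square)
qed simp

lemma (in finite_measure) integrable_power_of_AE_bounded:
  fixes f :: "'a \<Rightarrow> real"
  assumes "f \<in> borel_measurable M" "AE \<omega> in M. \<bar>f \<omega>\<bar> \<le> D"
  shows "integrable M (\<lambda>\<omega>. f \<omega> ^ k)"
proof (rule integrable_const_bound[where B="D ^ k"])
  show "AE \<omega> in M. norm (f \<omega> ^ k) \<le> D ^ k"
    using assms(2) by eventually_elim (simp add: power_abs power_mono)
qed (use assms(1) in simp)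

lemma K_LinfL2_le_truncation:
  fixes f :: "'a \<Rightarrow> real"
  assumes "0 < l" "0 \<le> t" "f \<in> borel_measurable M" "integrable M (\<lambda>\<omega>. f \<omega> ^ 4)"
  shows "K_LinfL2 M t f \<le> l + t * (sqrt (\<integral>\<omega>. f \<omega> ^ 4 \<partial>M) / l)"
proof -
  define g where "g \<omega> = (if \<bar>f \<omega>\<bar> \<le> l then f \<omega> else 0)" for \<omega>
  define h where "h \<omega> = (if \<bar>f \<omega>\<bar> \<le> l then 0 else f \<omega>)" for \<omega>
  have g_bound: "\<bar>g \<omega>\<bar> \<le> l" for \<omega>
    using assms(1) by (simp add: g_def)
  have "g \<in> borel_measurable M"
    unfolding g_def using assms(3) by measurable
  then have g: "g \<in> Linf M"
    unfolding Linf_def using g_bound by (auto intro!: exI[of _ l])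
  have h_tail: "(h \<omega>)^2 \<le> f \<omega> ^ 4 / l^2" for \<omega>
    unfolding h_def by (rule truncation_tail_sq_le[OF assms(1)])
  have h_integrable: "integrable M (\<lambda>\<omega>. (h \<omega>)^2)"
    by (rule Bochner_Integration.integrable_bound[where f="\<lambda>\<omega>. f \<omega> ^ 4 / l^2"])
      (use assms(3,4) h_tail in \<open>auto simp: h_def\<close>)
  then have h: "h \<in> L2 M"
    unfolding L2_def h_def using assms(3) by auto
  have "(\<integral>\<omega>. (h \<omega>)^2 \<partial>M) \<le> (\<integral>\<omega>. f \<omega> ^ 4 / l^2 \<partial>M)"
    using h_integrable assms(4) h_tail by (intro integral_mono) auto
  then have "L2_norm M h \<le> sqrt (\<integral>\<omega>. f \<omega> ^ 4 / l^2 \<partial>M)"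
    unfolding L2_norm_def by simp
  also have "\<dots> = sqrt (\<integral>\<omega>. f \<omega> ^ 4 \<partial>M) / l"
    using assms(1) by (simp add: real_sqrt_divide)
  finally have "L2_norm M h \<le> sqrt (\<integral>\<omega>. f \<omega> ^ 4 \<partial>M) / l" .
  moreover have "AE \<omega> in M. f \<omega> = g \<omega> + h \<omega>"
    by (simp add: g_def h_def)
  then have "K_LinfL2 M t f \<le> Linf_norm M g + t * L2_norm M h"
    using assms(2) g h by (rule K_LinfL2_le[rotated 3])
  moreover have "Linf_norm M g \<le> l"
    using g_bound assms(1) by (intro Linf_norm_le) auto
  ultimately show ?thesis
    using mult_left_mono[OF _ assms(2)] by (smt (verit))
qed

lemma K_LinfL2_fourth_moment_lower:
  fixes f :: "'a \<Rightarrow> real"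
  assumes "0 < k" "k \<le> K_LinfL2 M t f" "0 \<le> t"
    and "f \<in> borel_measurable M" "integrable M (\<lambda>\<omega>. f \<omega> ^ 4)"
  shows "k ^ 4 \<le> 16 * t^2 * (\<integral>\<omega>. f \<omega> ^ 4 \<partial>M)"
proof -
  define s where "s = sqrt (\<integral>\<omega>. f \<omega> ^ 4 \<partial>M)"
  have "k \<le> k / 2 + t * (s / (k / 2))"
    using assms(2) K_LinfL2_le_truncation[of "k / 2" t f M] assms unfolding s_def by simp
  then have "k^2 \<le> 4 * t * s"
    using assms(1) by (simp add: field_simps power2_eq_square)
  then have "(k^2)^2 \<le> (4 * t * s)^2"
    using assms(1) by (intro power_mono) auto
  then show ?thesis
    by (simp add: s_def power_mult_distrib integral_nonneg_AE flip: power_mult)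
qed

lemma (in prob_space) sum_Pow_integral_signed_sum_fourth_le:
  fixes f :: "'i \<Rightarrow> 'a \<Rightarrow> real" and B :: real
  assumes "finite I" "\<And>i. i \<in> I \<Longrightarrow> f i \<in> borel_measurable M"
    and bound: "AE \<omega> in M. \<forall>i\<in>I. \<bar>f i \<omega>\<bar> \<le> B"
  shows "(\<Sum>A\<in>Pow I. \<integral>\<omega>. (\<Sum>i\<in>I. sign_vec A i * f i \<omega>)^4 \<partial>M)
    \<le> 3 * 2 ^ card I * (card I * B^2)^2"
proof -
  have "(\<lambda>\<omega>. \<Sum>i\<in>I. sign_vec A i * f i \<omega>) \<in> borel_measurable M" for A
    using assms(2) by (intro borel_measurable_sum borel_measurable_times) auto
  moreover have "AE \<omega> in M. \<bar>\<Sum>i\<in>I. sign_vec A i * f i \<omega>\<bar> \<le> card I * B" for A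
    using bound by eventually_elim (intro abs_signed_sum_le, auto)
  ultimately have integrable: "integrable M (\<lambda>\<omega>. (\<Sum>i\<in>I. sign_vec A i * f i \<omega>)^4)" for A
    by (rule integrable_power_of_AE_bounded)
  have "(\<Sum>A\<in>Pow I. \<integral>\<omega>. (\<Sum>i\<in>I. sign_vec A i * f i \<omega>)^4 \<partial>M)
      = (\<integral>\<omega>. (\<Sum>A\<in>Pow I. (\<Sum>i\<in>I. sign_vec A i * f i \<omega>)^4) \<partial>M)"
    by (simp add: integrable)
  also have "\<dots> \<le> 3 * 2 ^ card I * (card I * B^2)^2"
  proof (rule integral_le_const)
    show "AE \<omega> in M. (\<Sum>A\<in>Pow I. (\<Sum>i\<in>I. sign_vec A i * f i \<omega>)^4) \<le> 3 * 2 ^ card I * (card I * B^2)^2"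
      using bound
    proof eventually_elim
      case (elim \<omega>)
      have "(f i \<omega>)^2 \<le> B^2" if "i \<in> I" for i
        using elim that by (metis abs_ge_zero power2_abs power_mono)
      then have "(\<Sum>i\<in>I. (f i \<omega>)^2) \<le> (\<Sum>i\<in>I. B^2)"
        by (rule sum_mono)
      then have "(\<Sum>i\<in>I. (f i \<omega>)^2)^2 \<le> (card I * B^2)^2"
        by (intro power_mono) (auto simp: sum_nonneg)
      then have "3 * 2 ^ card I * (\<Sum>i\<in>I. (f i \<omega>)^2)^2 \<le> 3 * 2 ^ card I * (card I * B^2)^2"
        by (rule mult_left_mono) simp
      then show ?case
        using sum_Pow_signed_sum_fourth_le[OF assms(1), of "\<lambda>i. f i \<omega>"] by linarith
    qed
  qed (use integrable in simp)
  finally show ?thesis .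
qed

lemma AE_image_eq_sum_unit_images:
  fixes T :: "(nat \<Rightarrow> real) \<Rightarrow> 'a \<Rightarrow> real"
  assumes lin: "\<forall>x\<in>l12_sum. \<forall>y\<in>l12_sum. \<forall>a b :: real.
      AE \<omega> in M. T (\<lambda>i. a * x i + b * y i) \<omega> = a * T x \<omega> + b * T y \<omega>"
    and "finite I"
  shows "AE \<omega> in M. T (\<lambda>j. if j \<in> I then c j else 0) \<omega> = (\<Sum>i\<in>I. c i * T (indicator {i}) \<omega>)"
  using assms(2)
proof (induction I rule: finite_induct)
  case empty
  have zero: "(\<lambda>_. 0) \<in> l12_sum"
    by (rule l12_sum_finite_support[of "{}"]) auto
  show ?case
    using lin[rule_format, OF zero zero, of 0 0] by simp
next
  case (insert k F)
  have x: "(\<lambda>j. if j \<in> F then c j else 0) \<in> l12_sum"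
    by (intro l12_sum_finite_support[OF insert.hyps(1)]) auto
  have y: "indicator {k} \<in> l12_sum"
    by (intro l12_sum_finite_support[of "{k}"]) (auto split: split_indicator)
  have "AE \<omega> in M. T (\<lambda>j. 1 * (if j \<in> F then c j else 0) + c k * indicator {k} j) \<omega>
      = 1 * T (\<lambda>j. if j \<in> F then c j else 0) \<omega> + c k * T (indicator {k}) \<omega>"
    using lin[rule_format, OF x y, of 1 "c k"] .
  moreover have "(\<lambda>j. 1 * (if j \<in> F then c j else 0) + c k * indicator {k} j)
      = (\<lambda>j. if j \<in> insert k F then c j else 0)"
    using insert.hyps by (auto simp: fun_eq_iff split: split_indicator)
  ultimately have "AE \<omega> in M. T (\<lambda>j. if j \<in> insert k F then c j else 0) \<omega>
      = T (\<lambda>j. if j \<in> F then c j else 0) \<omega> + c k * T (indicator {k}) \<omega>"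
    by simp
  then show ?case
    using insert.IH by eventually_elim (simp add: insert.hyps)
qed

lemma unit_images_AE_bounded:
  fixes T :: "(nat \<Rightarrow> real) \<Rightarrow> 'a \<Rightarrow> real"
  assumes "\<forall>x\<in>l1. T x \<in> Linf M \<and> Linf_norm M (T x) \<le> B * l1_norm x"
  shows "T (indicator {n}) \<in> borel_measurable M" "AE \<omega> in M. \<bar>T (indicator {n}) \<omega>\<bar> \<le> \<bar>B\<bar> + 1"
proof -
  have "indicator {n} \<in> l1"
    by (rule l1_finite_support, rule finite_subset[of _ "{n}"]) (auto split: split_indicator)
  moreover have "(\<lambda>i. \<bar>indicator {n} i :: real\<bar>) = (\<lambda>i. if i = n then 1 else 0)"
    by (auto split: split_indicator)
  then have "l1_norm (indicator {n}) = 1"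
    unfolding l1_norm_def using sums_single[of n "\<lambda>_. 1 :: real"] sums_unique by metis
  ultimately have Tn: "T (indicator {n}) \<in> Linf M" "Linf_norm M (T (indicator {n})) \<le> B"
    using assms by auto
  then show "T (indicator {n}) \<in> borel_measurable M"
    by (simp add: Linf_def)
  show "AE \<omega> in M. \<bar>T (indicator {n}) \<omega>\<bar> \<le> \<bar>B\<bar> + 1"
    using Tn by (intro AE_abs_le_of_Linf_norm_less) auto
qed

lemma (in finite_measure) signed_unit_images_fourth_moment_lower:
  fixes T :: "(nat \<Rightarrow> real) \<Rightarrow> 'a \<Rightarrow> real"
  assumes lin: "\<forall>x\<in>l12_sum. \<forall>y\<in>l12_sum. \<forall>a b :: real.
      AE \<omega> in M. T (\<lambda>i. a * x i + b * y i) \<omega> = a * T x \<omega> + b * T y \<omega>"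
    and K_lower: "\<forall>x\<in>l12_sum. \<forall>t>0. K_l12 t x / C \<le> K_LinfL2 M t (T x)"
    and "0 < C" "finite I" "I \<noteq> {}"
    and measurable: "\<And>i. i \<in> I \<Longrightarrow> T (indicator {i}) \<in> borel_measurable M"
    and bound: "AE \<omega> in M. \<forall>i\<in>I. \<bar>T (indicator {i}) \<omega>\<bar> \<le> D"
  shows "(card I / C) ^ 4 \<le> 16 * card I * (\<integral>\<omega>. (\<Sum>i\<in>I. sign_vec A i * T (indicator {i}) \<omega>)^4 \<partial>M)"
proof -
  define x where "x j = (if j \<in> I then sign_vec A j else 0)" for j
  define \<phi> where "\<phi> \<omega> = (\<Sum>i\<in>I. sign_vec A i * T (indicator {i}) \<omega>)" for \<omega>
  have x: "x \<in> l12_sum"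
    unfolding x_def by (rule l12_sum_finite_support[OF \<open>finite I\<close>]) auto
  have card_pos: "0 < card I"
    using \<open>finite I\<close> \<open>I \<noteq> {}\<close> by (simp add: card_gt_0_iff)
  have "real (card I) = (\<Sum>j\<in>I. \<bar>x j\<bar>)"
    by (simp add: x_def)
  also have "\<dots> \<le> K_l12 (sqrt (card I)) x"
    by (rule sum_abs_le_K_l12[OF x \<open>finite I\<close>])
  finally have "card I / C \<le> K_l12 (sqrt (card I)) x / C"
    using \<open>0 < C\<close> by (simp add: divide_right_mono)
  also have "\<dots> \<le> K_LinfL2 M (sqrt (card I)) (T x)"
    using K_lower x card_pos by simp
  also have "\<dots> = K_LinfL2 M (sqrt (card I)) \<phi>"
    unfolding x_def \<phi>_def by (rule K_LinfL2_cong_AE, rule AE_image_eq_sum_unit_images[OF lin \<open>finite I\<close>])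
  finally have K: "card I / C \<le> K_LinfL2 M (sqrt (card I)) \<phi>" .
  have \<phi>_measurable: "\<phi> \<in> borel_measurable M"
    unfolding \<phi>_def using measurable by (intro borel_measurable_sum borel_measurable_times) auto
  have "AE \<omega> in M. \<bar>\<phi> \<omega>\<bar> \<le> card I * D"
    using bound unfolding \<phi>_def by eventually_elim (intro abs_signed_sum_le, auto)
  then have "integrable M (\<lambda>\<omega>. \<phi> \<omega> ^ 4)"
    by (rule integrable_power_of_AE_bounded[OF \<phi>_measurable])
  with K \<phi>_measurable have "(card I / C) ^ 4 \<le> 16 * (sqrt (card I))^2 * (\<integral>\<omega>. \<phi> \<omega> ^ 4 \<partial>M)"
    using \<open>0 < C\<close> card_pos by (intro K_LinfL2_fourth_moment_lower) auto
  then show ?thesis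
    by (simp add: \<phi>_def)
qed

lemma (in prob_space) card_le_of_K_representation:
  fixes T :: "(nat \<Rightarrow> real) \<Rightarrow> 'a \<Rightarrow> real" and C D :: real
  assumes lin: "\<forall>x\<in>l12_sum. \<forall>y\<in>l12_sum. \<forall>a b :: real.
      AE \<omega> in M. T (\<lambda>i. a * x i + b * y i) \<omega> = a * T x \<omega> + b * T y \<omega>"
    and K_lower: "\<forall>x\<in>l12_sum. \<forall>t>0. K_l12 t x / C \<le> K_LinfL2 M t (T x)"
    and "0 < C" "finite I" "I \<noteq> {}"
    and measurable: "\<And>i. i \<in> I \<Longrightarrow> T (indicator {i}) \<in> borel_measurable M"
    and bound: "AE \<omega> in M. \<forall>i\<in>I. \<bar>T (indicator {i}) \<omega>\<bar> \<le> D"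
  shows "real (card I) \<le> 48 * C^4 * D^4"
proof -
  define n where "n = real (card I)"
  define \<phi> where "\<phi> A \<omega> = (\<Sum>i\<in>I. sign_vec A i * T (indicator {i}) \<omega>)" for A \<omega>
  have "0 < n"
    using \<open>finite I\<close> \<open>I \<noteq> {}\<close> by (simp add: n_def card_gt_0_iff)
  have "(n / C) ^ 4 \<le> 16 * n * (\<integral>\<omega>. \<phi> A \<omega> ^ 4 \<partial>M)" for A
    using signed_unit_images_fourth_moment_lower[OF assms] by (simp add: n_def \<phi>_def)
  then have "2 ^ card I * (n / C) ^ 4 \<le> 16 * n * (\<Sum>A\<in>Pow I. \<integral>\<omega>. \<phi> A \<omega> ^ 4 \<partial>M)"
    using sum_mono[of "Pow I" "\<lambda>_. (n / C) ^ 4"] \<open>finite I\<close> by (simp add: card_Pow sum_distrib_left)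
  also have "\<dots> \<le> 16 * n * (3 * 2 ^ card I * (n * D^2)^2)"
    unfolding \<phi>_def n_def
    using sum_Pow_integral_signed_sum_fourth_le[OF \<open>finite I\<close> measurable bound]
    by (intro mult_left_mono) simp_all
  also have "\<dots> = 2 ^ card I * (48 * n ^ 3 * D^4)"
    by algebra
  finally have "(n / C) ^ 4 \<le> 48 * n ^ 3 * D^4"
    by simp
  then have "n * n ^ 3 \<le> (48 * C^4 * D^4) * n ^ 3"
    using \<open>0 < C\<close> by (simp add: power_divide field_simps power3_eq_cube power4_eq_xxxx)
  then show ?thesis
    using \<open>0 < n\<close> by (simp add: n_def)
qed

theorem theorem5p1:
  fixes M :: "'a measure"
  assumes "prob_space M"
  shows "\<not> l12_K_closed_representable_in_LinfL2 M"
proof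
  assume "l12_K_closed_representable_in_LinfL2 M"
  then obtain T :: "(nat \<Rightarrow> real) \<Rightarrow> ('a \<Rightarrow> real)" and C B where "0 < C"
    and lin: "\<forall>x\<in>l12_sum. \<forall>y\<in>l12_sum. \<forall>a b :: real.
      AE \<omega> in M. T (\<lambda>i. a * x i + b * y i) \<omega> = a * T x \<omega> + b * T y \<omega>"
    and bounded: "\<forall>x\<in>l1. T x \<in> Linf M \<and> Linf_norm M (T x) \<le> B * l1_norm x"
    and K_lower: "\<forall>x\<in>l12_sum. \<forall>t>0. K_l12 t x / C \<le> K_LinfL2 M t (T x)"
    unfolding l12_K_closed_representable_in_LinfL2_def by blast
  interpret prob_space M by fact
  define D where "D = \<bar>B\<bar> + 1"
  define N where "N = nat \<lceil>48 * C^4 * D^4\<rceil> + 1"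
  have "{..<N} \<noteq> {}"
    by (auto simp: N_def)
  moreover have "AE \<omega> in M. \<forall>i\<in>{..<N}. \<bar>T (indicator {i}) \<omega>\<bar> \<le> D"
    unfolding D_def using unit_images_AE_bounded(2)[OF bounded] by (intro AE_finite_allI) auto
  ultimately have "real (card {..<N}) \<le> 48 * C^4 * D^4"
    using card_le_of_K_representation[OF lin K_lower \<open>0 < C\<close> finite_lessThan]
      unit_images_AE_bounded(1)[OF bounded] by blast
  then have "real N \<le> 48 * C^4 * D^4"
    by simp
  then show False
    unfolding N_def by linarith
qed

end
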